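(* For each of the following four pairs $T=(T_1,T_2)$: (i) $T_1=\begin{pmatrix}1&0\\1&0\end{pmatrix}$, $T_2=\begin{pmatrix}1&1\\1&0\end{pmatrix}$; (ii) $T_1=\begin{pmatrix}1&0\\1&0\end{pmatrix}$, $T_2=\begin{pmatrix}1&1\\0&1\end{pmatrix}$; (iii) $T_1=\begin{pmatrix}1&0\\1&0\end{pmatrix}$, $T_2=\begin{pmatrix}1&1\\1&1\end{pmatrix}$; (iv) $T_1=\begin{pmatrix}1&0\\0&1\end{pmatrix}$, $T_2=\begin{pmatrix}1&1\\1&1\end{pmatrix}$, one has $h(T)=\frac{1}{\lambda^2}\ln 2$, where $\lambda=\frac{1+\sqrt5}{2}$.
   Context: Define $\gamma^{[s_j]}_{i,n}$ ($i,j\in\{1,2\}$, $n\ge0$) by $\gamma^{[s_j]}_{i,0}=1$ and for $n\ge1$ $$\gamma^{[s_1]}_{i,n}=\sum_{j,k=1}^2T_1(i,j)T_2(i,k)\,\gamma^{[s_1]}_{j,n-1}\gamma^{[s_2]}_{k,n-1},\qquad \gamma^{[s_2]}_{i,n}=\sum_{j=1}^2T_1(i,j)\,\gamma^{[s_1]}_{j,n-1}.$$ Let $l_0=1$, $l_1=2$, $l_{k+1}=l_k+l_{k-1}$, $|E_n|=\sum_{k=0}^nl_k$ (the number of elements of word length $\le n$ in the monoid $G=\langle s_1,s_2\mid s_2s_2=s_2\rangle$), and $h(T)=\limsup_{n\to\infty}\frac{\ln(\gamma^{[s_1]}_{1,n}+\gamma^{[s_1]}_{2,n})}{|E_n|}$,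 the paper's entropy of the $G$-vertex shift with adjacency matrices $T=(T_1,T_2)$ over $\{1,2\}$. *)

theory Defs
  imports Complex_Main "HOL-Library.Extended_Real"
begin

text \<open>2x2 matrices over the alphabet {1,2}, represented as functions on indices 1 and 2.\<close>
definition mat2 :: "nat \<Rightarrow> nat \<Rightarrow> nat \<Rightarrow> nat \<Rightarrow> (nat \<Rightarrow> nat \<Rightarrow> nat)" where
  "mat2 a b c d = (\<lambda>i j. if i = 1 then (if j = 1 then a else b) else (if j = 1 then c else d))"

text \<open>gamma T1 T2 n = (gamma^[s1]_{.,n}, gamma^[s2]_{.,n}).\<close>
fun gamma :: "(nat \<Rightarrow> nat \<Rightarrow> nat) \<Rightarrow> (nat \<Rightarrow> nat \<Rightarrow> nat) \<Rightarrow> nat \<Rightarrow> (nat \<Rightarrow> nat) \<times> (nat \<Rightarrow> nat)" where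
  "gamma T1 T2 0 = ((\<lambda>i. 1), (\<lambda>i. 1))"
| "gamma T1 T2 (Suc n) =
     (let g1 = fst (gamma T1 T2 n); g2 = snd (gamma T1 T2 n) in
      ((\<lambda>i. \<Sum>j\<in>{1,2}. \<Sum>k\<in>{1,2}. T1 i j * T2 i k * g1 j * g2 k),
       (\<lambda>i. \<Sum>j\<in>{1,2}. T1 i j * g1 j)))"

fun lseq :: "nat \<Rightarrow> nat" where
  "lseq 0 = 1"
| "lseq (Suc 0) = 2"
| "lseq (Suc (Suc k)) = lseq (Suc k) + lseq k"

definition Ecard :: "nat \<Rightarrow> nat" where
  "Ecard n = (\<Sum>k\<le>n. lseq k)"

definition entropy :: "(nat \<Rightarrow> nat \<Rightarrow> nat) \<Rightarrow> (nat \<Rightarrow> nat \<Rightarrow> nat) \<Rightarrow> ereal" where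
  "entropy T1 T2 = limsup (\<lambda>n. ereal (ln (real (fst (gamma T1 T2 n) 1 + fst (gamma T1 T2 n) 2)) / real (Ecard n)))"

end

theory Submission
  imports Defs "HOL-Number_Theory.Fib"
begin

text \<open>With \<open>a\<^sub>n = \<gamma>\<^bsup>[s\<^sub>1]\<^esup>\<^sub>1\<^sub>,\<^sub>n\<close> and
  \<open>b\<^sub>n = \<gamma>\<^bsup>[s\<^sub>2]\<^esup>\<^sub>i\<^sub>,\<^sub>n\<close> (independent of \<open>i\<close>) one has \<open>a\<^sub>n\<^sub>+\<^sub>1 = 2 a\<^sub>n b\<^sub>n\<close> and
  \<open>b\<^sub>n\<^sub>+\<^sub>1 = a\<^sub>n\<close>, so the exponents of 2 follow the Fibonacci recursion:
  \<open>a\<^sub>n = 2^(F\<^sub>n\<^sub>+\<^sub>2 - 1)\<close>, and \<open>\<gamma>\<^bsup>[s\<^sub>1]\<^esup>\<^sub>1\<^sub>,\<^sub>n + \<gamma>\<^bsup>[s\<^sub>1]\<^esup>\<^sub>2\<^sub>,\<^sub>n\<close> lies between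
  \<open>a\<^sub>n\<close> and \<open>2 a\<^sub>n\<close>. As \<open>l\<^sub>n = F\<^sub>n\<^sub>+\<^sub>2\<close> and \<open>|E\<^sub>n| = F\<^sub>n\<^sub>+\<^sub>4 - 2\<close>, the normalised logarithms are
  squeezed towards \<open>ln 2 \<cdot> lim F\<^sub>n\<^sub>+\<^sub>2 / F\<^sub>n\<^sub>+\<^sub>4 = ln 2 / \<lambda>\<^sup>2\<close>.\<close>

lemma fib_ratio_tendsto:
  fixes \<phi> :: real
  defines "\<phi> \<equiv> (1 + sqrt 5) / 2"
  shows "(\<lambda>n. real (fib n) / real (fib (n + k))) \<longlonglongrightarrow> 1 / \<phi> ^ k"
proof -
  define r where "r n = real (fib n) / (\<phi> ^ n / sqrt 5)" for n
  have r: "r \<longlonglongrightarrow> 1"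
    unfolding r_def \<phi>_def by (rule fib_asymptotics)
  have \<phi>_pos: "\<phi> > 0" by (simp add: \<phi>_def add_pos_nonneg)
  then have eq: "real (fib n) / real (fib (n + k)) = r n / r (n + k) / \<phi> ^ k" for n
    by (simp add: r_def power_add field_simps)
  have "(\<lambda>n. r n / r (n + k) / \<phi> ^ k) \<longlonglongrightarrow> 1 / 1 / \<phi> ^ k"
    using r LIMSEQ_ignore_initial_segment[OF r, of k] \<phi>_pos by (intro tendsto_intros) auto
  then show ?thesis by (simp add: eq)
qed

lemma lseq_eq_fib: "lseq n = fib (n + 2)"
  by (induction n rule: lseq.induct) (simp_all add: numeral_eq_Suc)

lemma Ecard_add_2: "Ecard n + 2 = fib (n + 4)"
  by (induction n) (simp_all add: Ecard_def lseq_eq_fib numeral_eq_Suc)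

lemma Suc_le_Ecard: "Suc n \<le> Ecard n"
proof -
  have "card {..n} \<le> (\<Sum>k\<le>n. lseq k)"
    using sum_mono[of "{..n}" "\<lambda>_. 1::nat" lseq] by (simp add: lseq_eq_fib Suc_le_eq fib_neq_0_nat)
  then show ?thesis by (simp add: Ecard_def)
qed

lemma inverse_Ecard_tendsto_0: "(\<lambda>n. 1 / real (Ecard n)) \<longlonglongrightarrow> 0"
proof -
  have "filterlim (\<lambda>n. real (Ecard n)) at_top sequentially"
    by (rule filterlim_at_top_mono[OF filterlim_real_sequentially])
       (auto intro!: always_eventually simp: Suc_leD[OF Suc_le_Ecard])
  then show ?thesis
    by (simp add: inverse_eq_divide[symmetric] tendsto_inverse_0_at_top)
qed

lemma fib_div_Ecard_tendsto:
  fixes \<phi> :: real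
  defines "\<phi> \<equiv> (1 + sqrt 5) / 2"
  shows "(\<lambda>n. real (fib (n + 2)) / real (Ecard n)) \<longlonglongrightarrow> 1 / \<phi>\<^sup>2"
proof -
  have factor: "x / E = x / (E + 2) * (1 + 2 * (1 / E))" if "E > 0" for x E :: real
  proof -
    have "1 + 2 * (1 / E) = (E + 2) / E" using that by (simp add: field_simps)
    with that show ?thesis by simp
  qed
  have eq: "real (fib (n + 2)) / real (Ecard n)
      = real (fib (n + 2)) / real (fib (n + 2 + 2)) * (1 + 2 * (1 / real (Ecard n)))" for n
  proof -
    have fib_eq: "real (fib (n + 2 + 2)) = real (Ecard n) + 2"
      by (metis Ecard_add_2 add.assoc numeral_Bit0 of_nat_add of_nat_numeral)
    have "real (Ecard n) > 0" using Suc_le_Ecard[of n] by simp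
    then show ?thesis unfolding fib_eq by (rule factor)
  qed
  have "(\<lambda>n. real (fib (n + 2)) / real (fib (n + 2 + 2))) \<longlonglongrightarrow> 1 / \<phi>\<^sup>2"
    using LIMSEQ_ignore_initial_segment[OF fib_ratio_tendsto[of 2], of 2] unfolding \<phi>_def .
  then have "(\<lambda>n. real (fib (n + 2)) / real (fib (n + 2 + 2)) * (1 + 2 * (1 / real (Ecard n))))
      \<longlonglongrightarrow> 1 / \<phi>\<^sup>2 * (1 + 2 * 0)"
    by (intro tendsto_mult tendsto_add tendsto_const inverse_Ecard_tendsto_0)
  then show ?thesis
    unfolding eq by (simp only: mult_zero_right add_0_right mult_1_right)
qed

lemma ln_div_tendsto_of_pow2_bounds:
  fixes S L D :: "nat \<Rightarrow> nat"
  assumes lower: "\<And>n. 2 ^ (L n - 1) \<le> S n" and upper: "\<And>n. S n \<le> 2 ^ L n"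
    and D_pos: "\<And>n. D n > 0" and inverse_D: "(\<lambda>n. 1 / real (D n)) \<longlonglongrightarrow> 0"
    and ratio: "(\<lambda>n. real (L n) / real (D n)) \<longlonglongrightarrow> c"
  shows "(\<lambda>n. ln (real (S n)) / real (D n)) \<longlonglongrightarrow> c * ln 2"
proof (rule real_tendsto_sandwich)
  have ln_lower: "(real (L n) - 1) * ln 2 \<le> ln (real (S n))" for n
  proof -
    have "(real (L n) - 1) * ln 2 \<le> real (L n - 1) * ln 2"
      by (intro mult_right_mono) auto
    also have "\<dots> = ln (2 ^ (L n - 1))"
      by (simp add: ln_realpow)
    also have "\<dots> \<le> ln (real (S n))"
      using lower[of n] by (intro ln_mono) (simp_all add: of_nat_le_iff[of "2 ^ _", symmetric])
    finally show ?thesis .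
  qed
  have ln_upper: "ln (real (S n)) \<le> real (L n) * ln 2" for n
  proof -
    have "S n > 0" using less_le_trans[OF _ lower[of n]] by simp
    then have "ln (real (S n)) \<le> ln (2 ^ L n)"
      using upper[of n] by (intro ln_mono) (simp_all add: of_nat_le_iff[of _ "2 ^ _", symmetric])
    then show ?thesis by (simp add: ln_realpow)
  qed
  have "real (L n) / real (D n) * ln 2 - ln 2 * (1 / real (D n)) \<le> ln (real (S n)) / real (D n)"
    for n
  proof -
    have "real (L n) / real (D n) * ln 2 - ln 2 * (1 / real (D n)) = (real (L n) - 1) * ln 2 / real (D n)"
      using D_pos[of n] by (simp add: field_simps)
    also have "\<dots> \<le> ln (real (S n)) / real (D n)"
      using ln_lower[of n] by (rule divide_right_mono) simp
    finally show ?thesis .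
  qed
  then show "\<forall>\<^sub>F n in sequentially. real (L n) / real (D n) * ln 2 - ln 2 * (1 / real (D n))
      \<le> ln (real (S n)) / real (D n)"
    by simp
  have "ln (real (S n)) / real (D n) \<le> real (L n) / real (D n) * ln 2" for n
    using divide_right_mono[OF ln_upper[of n], of "real (D n)"] by simp
  then show "\<forall>\<^sub>F n in sequentially. ln (real (S n)) / real (D n) \<le> real (L n) / real (D n) * ln 2"
    by simp
  show "(\<lambda>n. real (L n) / real (D n) * ln 2 - ln 2 * (1 / real (D n))) \<longlonglongrightarrow> c * ln 2"
    using tendsto_diff[OF tendsto_mult_right[OF ratio] tendsto_mult_left[OF inverse_D]] by simp
  show "(\<lambda>n. real (L n) / real (D n) * ln 2) \<longlonglongrightarrow> c * ln 2"
    using tendsto_mult_right[OF ratio] .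
qed

definition pow2_fib :: "nat \<Rightarrow> nat" where
  "pow2_fib n = 2 ^ (fib n - 1)"

lemma pow2_fib_Suc_Suc_Suc:
  "pow2_fib (Suc (Suc (Suc n))) = 2 * pow2_fib (Suc (Suc n)) * pow2_fib (Suc n)"
proof -
  obtain a b where a: "fib (Suc (Suc n)) = Suc a" and b: "fib (Suc n) = Suc b"
    using fib_neq_0_nat[of "Suc n"] fib_neq_0_nat[of "Suc (Suc n)"] by (metis gr0_conv_Suc zero_less_Suc)
  have "fib (Suc (Suc (Suc n))) = Suc a + Suc b"
    by (simp only: fib.simps(3)[of "Suc n"] a b)
  then show ?thesis
    unfolding pow2_fib_def a b by (simp add: power_add)
qed

lemma gamma_mat2_1111:
  assumes "c + d = 1"
  shows "gamma (mat2 1 0 c d) (mat2 1 1 1 1) n = ((\<lambda>_. pow2_fib (n + 2)), (\<lambda>_. pow2_fib (n + 1)))"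
proof (induction n)
  case 0
  show ?case by (simp add: pow2_fib_def fun_eq_iff)
next
  case (Suc n)
  with assms show ?case
    by (simp add: mat2_def Let_def fun_eq_iff pow2_fib_Suc_Suc_Suc flip: distrib_right)
qed

text \<open>At \<open>n = 0\<close> the entry \<open>pow2_fib 1 * pow2_fib 0 = 1\<close> is correct only because
  \<open>fib 0 - 1\<close> truncates to \<open>0\<close>.\<close>

lemma gamma_mat2_1010:
  assumes "c + d = 1"
  shows "gamma (mat2 1 0 1 0) (mat2 1 1 c d) n =
    ((\<lambda>i. if i = 1 then pow2_fib (n + 2) else pow2_fib (n + 1) * pow2_fib n), (\<lambda>_. pow2_fib (n + 1)))"
proof (induction n)
  case 0
  show ?case by (simp add: pow2_fib_def fun_eq_iff)
next
  case (Suc n)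
  with assms show ?case
    by (simp add: mat2_def Let_def fun_eq_iff pow2_fib_Suc_Suc_Suc flip: distrib_right)
qed

lemma two_mult_pow2_fib_Suc: "2 * pow2_fib (Suc n) = 2 ^ fib (Suc n)"
  using fib_neq_0_nat[of "Suc n"] by (simp add: pow2_fib_def power_Suc[symmetric] del: power_Suc)

lemma pow2_fib_mult_le: "pow2_fib (n + 1) * pow2_fib n \<le> pow2_fib (n + 2)"
proof (cases n)
  case 0
  then show ?thesis by (simp add: pow2_fib_def)
next
  case (Suc m)
  then show ?thesis by (simp add: pow2_fib_Suc_Suc_Suc)
qed

lemma entropy_eq_of_pow2_fib_bounds:
  fixes \<phi> :: real
  defines "\<phi> \<equiv> (1 + sqrt 5) / 2"
  assumes "\<And>n. pow2_fib (n + 2) \<le> fst (gamma T1 T2 n) 1 + fst (gamma T1 T2 n) 2"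
    and "\<And>n. fst (gamma T1 T2 n) 1 + fst (gamma T1 T2 n) 2 \<le> 2 * pow2_fib (n + 2)"
  shows "entropy T1 T2 = ereal (ln 2 / \<phi>\<^sup>2)"
proof -
  have "(\<lambda>n. ln (real (fst (gamma T1 T2 n) 1 + fst (gamma T1 T2 n) 2)) / real (Ecard n))
      \<longlonglongrightarrow> 1 / \<phi>\<^sup>2 * ln 2"
  proof (rule ln_div_tendsto_of_pow2_bounds)
    show "2 ^ (fib (n + 2) - 1) \<le> fst (gamma T1 T2 n) 1 + fst (gamma T1 T2 n) 2" for n
      using assms(2)[of n] by (simp only: pow2_fib_def)
    show "fst (gamma T1 T2 n) 1 + fst (gamma T1 T2 n) 2 \<le> 2 ^ fib (n + 2)" for n
      using assms(3)[of n] two_mult_pow2_fib_Suc[of "Suc n"] by simp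
    show "Ecard n > 0" for n
      using Suc_le_Ecard[of n] by simp
  qed (use inverse_Ecard_tendsto_0 fib_div_Ecard_tendsto in \<open>simp_all add: \<phi>_def\<close>)
  then show ?thesis
    unfolding entropy_def by (intro lim_imp_Limsup) auto
qed

theorem corollary1:
  fixes lam :: real
  defines "lam \<equiv> (1 + sqrt 5) / 2"
  shows "entropy (mat2 1 0 1 0) (mat2 1 1 1 0) = ereal (ln 2 / lam^2)
       \<and> entropy (mat2 1 0 1 0) (mat2 1 1 0 1) = ereal (ln 2 / lam^2)
       \<and> entropy (mat2 1 0 1 0) (mat2 1 1 1 1) = ereal (ln 2 / lam^2)
       \<and> entropy (mat2 1 0 0 1) (mat2 1 1 1 1) = ereal (ln 2 / lam^2)"
proof -
  have T2_row_sum_1: "entropy (mat2 1 0 1 0) (mat2 1 1 c d) = ereal (ln 2 / lam^2)"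
    if "c + d = 1" for c d :: nat
    unfolding lam_def using pow2_fib_mult_le
    by (intro entropy_eq_of_pow2_fib_bounds) (simp_all only: gamma_mat2_1010[OF that], simp_all)
  have T1_row_sum_1: "entropy (mat2 1 0 c d) (mat2 1 1 1 1) = ereal (ln 2 / lam^2)"
    if "c + d = 1" for c d :: nat
    unfolding lam_def
    by (intro entropy_eq_of_pow2_fib_bounds) (simp_all only: gamma_mat2_1111[OF that], simp_all)
  show ?thesis
    using T2_row_sum_1[of 1 0] T2_row_sum_1[of 0 1] T1_row_sum_1[of 1 0] T1_row_sum_1[of 0 1] by simp
qed

end
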